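(* The full subcategory $\overline{\square}_\vee$ of $\mathbf{SLat}$ is closed under retracts in $\mathbf{SLat}$: if $B \in \mathbf{SLat}$ is a retract (in $\mathbf{SLat}$) of some $A \in \overline{\square}_\vee$, then $B \in \overline{\square}_\vee$.
   Context: $\mathbf{SLat}$ is the category of (join-)semilattices—sets with an associative, commutative, idempotent binary operation $\vee$—and homomorphisms preserving $\vee$ (not necessarily preserving any bounds or meets). Each semilattice is a poset via $x\le y\iff x\vee y=y$. $\overline{\square}_\vee$ is the full subcategory of $\mathbf{SLat}$ on the finite inhabited semilattices whose induced poset is a distributive lattice. *)

theory Defs
  imports Main
begin

definition semilattice_on :: "'a set \<Rightarrow> ('a \<Rightarrow> 'a \<Rightarrow> 'a) \<Rightarrow> bool" where
  "semilattice_on S j \<longleftrightarrow>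
     (\<forall>x\<in>S. \<forall>y\<in>S. j x y \<in> S) \<and>
     (\<forall>x\<in>S. \<forall>y\<in>S. \<forall>z\<in>S. j (j x y) z = j x (j y z)) \<and>
     (\<forall>x\<in>S. \<forall>y\<in>S. j x y = j y x) \<and>
     (\<forall>x\<in>S. j x x = x)"

definition sl_le :: "('a \<Rightarrow> 'a \<Rightarrow> 'a) \<Rightarrow> 'a \<Rightarrow> 'a \<Rightarrow> bool" where
  "sl_le j x y \<longleftrightarrow> j x y = y"

definition is_glb :: "'a set \<Rightarrow> ('a \<Rightarrow> 'a \<Rightarrow> 'a) \<Rightarrow> 'a \<Rightarrow> 'a \<Rightarrow> 'a \<Rightarrow> bool" where
  "is_glb S j x y m \<longleftrightarrow> m \<in> S \<and> sl_le j m x \<and> sl_le j m y \<and>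
     (\<forall>z\<in>S. sl_le j z x \<and> sl_le j z y \<longrightarrow> sl_le j z m)"

definition sl_hom :: "'a set \<Rightarrow> ('a \<Rightarrow> 'a \<Rightarrow> 'a) \<Rightarrow> 'b set \<Rightarrow> ('b \<Rightarrow> 'b \<Rightarrow> 'b) \<Rightarrow> ('a \<Rightarrow> 'b) \<Rightarrow> bool" where
  "sl_hom S j T k f \<longleftrightarrow> (\<forall>x\<in>S. f x \<in> T) \<and> (\<forall>x\<in>S. \<forall>y\<in>S. f (j x y) = k (f x) (f y))"

definition sl_retract :: "'b set \<Rightarrow> ('b \<Rightarrow> 'b \<Rightarrow> 'b) \<Rightarrow> 'a set \<Rightarrow> ('a \<Rightarrow> 'a \<Rightarrow> 'a) \<Rightarrow> bool" where
  "sl_retract B k A j \<longleftrightarrow>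
     (\<exists>s r. sl_hom B k A j s \<and> sl_hom A j B k r \<and> (\<forall>x\<in>B. r (s x) = x))"

(* Objects of the full subcategory: finite inhabited semilattices whose induced
   poset is a distributive lattice (binary meets exist and meet distributes over join). *)
definition in_box_vee :: "'a set \<Rightarrow> ('a \<Rightarrow> 'a \<Rightarrow> 'a) \<Rightarrow> bool" where
  "in_box_vee S j \<longleftrightarrow> semilattice_on S j \<and> finite S \<and> S \<noteq> {} \<and>
     (\<exists>m. (\<forall>x\<in>S. \<forall>y\<in>S. is_glb S j x y (m x y)) \<and>
          (\<forall>x\<in>S. \<forall>y\<in>S. \<forall>z\<in>S. m x (j y z) = j (m x y) (m x z)))"

end

theory Submission
  imports Defs
begin

(* If s : B \<rightarrow> A and r : A \<rightarrow> B are join homomorphisms with r \<circ> s = id, then B is finite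
   and nonempty as the image of r, and x \<sqinter> y := r (s x \<sqinter> s y) is a meet on B: both maps
   are monotone, so r carries the lower bounds of s x, s y to lower bounds of x, y, and any
   lower bound z of x, y satisfies z = r (s z) \<le> r (s x \<sqinter> s y). Since s and r preserve
   joins, distributivity of the meet in A transfers to B. *)

lemma sl_hom_mono:
  assumes "sl_hom S j T k f" and "x \<in> S" and "y \<in> S" and "sl_le j x y"
  shows "sl_le k (f x) (f y)"
  using assms unfolding sl_hom_def sl_le_def by metis

lemma sl_retraction_image:
  assumes "sl_hom B k A j s" and "sl_hom A j B k r" and "\<forall>x\<in>B. r (s x) = x"
  shows "r ` A = B"
  using assms unfolding sl_hom_def by (metis image_eqI subsetI subset_antisym image_subsetI)

lemma is_glb_retraction:
  assumes s: "sl_hom B k A j s" and r: "sl_hom A j B k r" and rs: "\<forall>x\<in>B. r (s x) = x"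
    and x: "x \<in> B" and y: "y \<in> B" and g: "is_glb A j (s x) (s y) g"
  shows "is_glb B k x y (r g)"
proof -
  have sx: "s x \<in> A" and sy: "s y \<in> A" and gA: "g \<in> A"
    using s x y g unfolding sl_hom_def is_glb_def by auto
  have "sl_le k (r g) (r (s x))" and "sl_le k (r g) (r (s y))"
    using g sl_hom_mono[OF r] gA sx sy unfolding is_glb_def by auto
  then have lower: "sl_le k (r g) x" "sl_le k (r g) y"
    using rs x y by simp_all
  have greatest: "sl_le k z (r g)" if z: "z \<in> B" and "sl_le k z x" and "sl_le k z y" for z
  proof -
    have sz: "s z \<in> A" using s z unfolding sl_hom_def by blast
    have "sl_le j (s z) g"
      using g sz sl_hom_mono[OF s z x] sl_hom_mono[OF s z y] that unfolding is_glb_def by blast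
    then have "sl_le k (r (s z)) (r g)" using sl_hom_mono[OF r sz gA] by blast
    then show ?thesis using rs z by simp
  qed
  have "r g \<in> B" using r gA unfolding sl_hom_def by blast
  then show ?thesis using lower greatest unfolding is_glb_def by blast
qed

theorem mainTheorem5:
  fixes A :: "'a set" and j :: "'a \<Rightarrow> 'a \<Rightarrow> 'a"
    and B :: "'b set" and k :: "'b \<Rightarrow> 'b \<Rightarrow> 'b"
  assumes "in_box_vee A j"
    and "semilattice_on B k"
    and "sl_retract B k A j"
  shows "in_box_vee B k"
proof -
  obtain s r where s: "sl_hom B k A j s" and r: "sl_hom A j B k r" and rs: "\<forall>x\<in>B. r (s x) = x"
    using assms(3) unfolding sl_retract_def by blast
  obtain m where glb: "\<forall>x\<in>A. \<forall>y\<in>A. is_glb A j x y (m x y)"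
    and distrib: "\<forall>x\<in>A. \<forall>y\<in>A. \<forall>z\<in>A. m x (j y z) = j (m x y) (m x z)"
    and "finite A" and "A \<noteq> {}"
    using assms(1) unfolding in_box_vee_def by blast
  have image: "r ` A = B" using sl_retraction_image[OF s r rs] .
  define mB where "mB x y = r (m (s x) (s y))" for x y
  have sA: "s x \<in> A" if "x \<in> B" for x using s that unfolding sl_hom_def by blast
  have "is_glb B k x y (mB x y)" if "x \<in> B" "y \<in> B" for x y
    unfolding mB_def using is_glb_retraction[OF s r rs] glb sA that by blast
  moreover have "mB x (k y z) = k (mB x y) (mB x z)" if "x \<in> B" "y \<in> B" "z \<in> B" for x y z
  proof -
    have "mB x (k y z) = r (j (m (s x) (s y)) (m (s x) (s z)))"
      unfolding mB_def using s distrib sA that unfolding sl_hom_def by simp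
    also have "\<dots> = k (mB x y) (mB x z)"
      unfolding mB_def using r glb sA that unfolding sl_hom_def is_glb_def by simp
    finally show ?thesis .
  qed
  ultimately show ?thesis
    unfolding in_box_vee_def using assms(2) image \<open>finite A\<close> \<open>A \<noteq> {}\<close> by blast
qed

end
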